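(* Let $0<\alpha<1$, $t=2^{1-\alpha}$, and let $x\in[0,1]$ be a non-dyadic number with $x\notin\mathcal{S}$. Then there exists $\delta>0$ such that for every $n\ge0$ there exists $J_n\ge n$ with $$\frac{1}{2^{1-\alpha}-1}\,2^{J_n(1-\alpha)}>|C_{J_n-1}(x)|>\delta\, 2^{J_n(1-\alpha)}$$ and either [$C_{J_n-1}(x)>0$ and $i_{J_n+1}(x)=0$] or [$C_{J_n-1}(x)<0$ and $i_{J_n+1}(x)=1$].
   Context: For $x\in[0,1]$ let $i_l(x)\in\{0,1\}$ be its binary digits, $x=\sum_{l\ge1}i_l(x)2^{-l}$. For $n\ge0$, $C_n(x)=\sum_{j=0}^{n}(-1)^{i_{j+1}(x)}2^{(1-\alpha)j}$ (the slope at $x$ of the piecewise affine partial sum $F_n(x)=\sum_{j=0}^n 2^{-\alpha j}\mathrm{dist}(2^jx,\mathbb{Z})$). $\mathcal{S}$ is the set of points of $[0,1]$ of the form $\frac{k}{2^{N}}+\frac{1}{3\cdot 2^{N}}$ or $\frac{k}{2^{N}}+\frac{2}{3\cdot 2^{N}}$ with $k,N\in\mathbb{N}$ (equivalently, points with $i_j(x)+i_{j+1}(x)=1$ for all large $j$). A dyadic number is one of the form $K2^{-N}$ with $K,N\in\mathbb{N}$. *)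

theory Defs
  imports Complex_Main
begin

text \<open>Binary digit i_l(x): x = sum_{l>=1} i_l(x) 2^{-l}. For non-dyadic x the expansion is unique
  and given by the l-th digit floor(2^l x) mod 2.\<close>
definition bindigit :: "nat \<Rightarrow> real \<Rightarrow> nat" where
  "bindigit l x = nat (\<lfloor>2 ^ l * x\<rfloor> mod 2)"

definition Cslope :: "real \<Rightarrow> nat \<Rightarrow> real \<Rightarrow> real" where
  "Cslope \<alpha> n x = (\<Sum>j=0..n. (-1) ^ bindigit (j+1) x * 2 powr ((1 - \<alpha>) * real j))"

definition dyadic :: "real \<Rightarrow> bool" where
  "dyadic x \<longleftrightarrow> (\<exists>K N :: nat. x = real K / 2 ^ N)"

definition setS :: "real set" where
  "setS = {x \<in> {0..1}. \<exists>k N :: nat.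
      x = real k / 2 ^ N + 1 / (3 * 2 ^ N) \<or> x = real k / 2 ^ N + 2 / (3 * 2 ^ N)}"

end

theory Submission
  imports Defs
begin

text \<open>Write \<open>t = 2 powr (1 - \<alpha>) > 1\<close>, \<open>\<epsilon>\<^sub>j = (-1) ^ i\<^sub>j\<^sub>+\<^sub>1(x)\<close> and \<open>b\<^sub>n = C\<^sub>n(x) / t ^ n\<close>,
  so that \<open>b\<^sub>n\<^sub>+\<^sub>1 = b\<^sub>n / t + \<epsilon>\<^sub>n\<^sub>+\<^sub>1\<close> and \<open>|b\<^sub>n| < t / (t - 1)\<close>. Since \<open>x \<notin> \<S>\<close>, the digits of
  \<open>x\<close> do not eventually alternate, so \<open>\<epsilon>\<^sub>p = \<epsilon>\<^sub>p\<^sub>+\<^sub>1 = s\<close> for infinitely many \<open>p\<close>. At such a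
  \<open>p\<close>, either \<open>s b\<^sub>p\<close> is already large, or \<open>s b\<^sub>p\<^sub>-\<^sub>1 \<le> -A\<close> for a fixed \<open>A > 1\<close>. In the latter
  case, walking backwards from \<open>p - 1\<close>, each step either meets a sign \<open>\<epsilon>\<^sub>J = -s\<close>, which
  makes \<open>\<epsilon>\<^sub>J b\<^sub>J\<^sub>-\<^sub>1\<close> large, or pushes \<open>s b\<close> down by a further \<open>1\<close>; the bound on \<open>|b|\<close>
  allows only boundedly many steps of the second kind.\<close>

lemma bindigit_0_or_1: "bindigit l x = 0 \<or> bindigit l x = 1"
  unfolding bindigit_def by (auto simp: mod2_eq_if)

lemma floor_double: "\<lfloor>2 * z\<rfloor> = 2 * \<lfloor>z\<rfloor> + \<lfloor>2 * z\<rfloor> mod 2" for z :: real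
proof (cases "z - of_int \<lfloor>z\<rfloor> < 1/2")
  case True
  then have "\<lfloor>2 * z\<rfloor> = 2 * \<lfloor>z\<rfloor>" by (intro floor_unique) linarith+
  then show ?thesis by simp
next
  case False
  then have "\<lfloor>2 * z\<rfloor> = 2 * \<lfloor>z\<rfloor> + 1" by (intro floor_unique) linarith+
  then show ?thesis by simp
qed

lemma floor_pow2_Suc_eq: "\<lfloor>2 ^ Suc l * x\<rfloor> = 2 * \<lfloor>2 ^ l * x\<rfloor> + int (bindigit (Suc l) x)"
  using floor_double[of "2 ^ l * x"] unfolding bindigit_def by (simp add: mult.assoc)

text \<open>The fractional part of \<open>2 ^ l * x\<close> minus \<open>1/3\<close> or \<open>2/3\<close> (according to the next digit)
  doubles at every step of an alternating tail, and stays bounded; hence it vanishes.\<close>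

lemma alternating_digits_imp_setS:
  fixes x :: real
  assumes x: "x \<in> {0..1}"
    and alt: "\<And>l. l \<ge> M \<Longrightarrow> bindigit (Suc l) x \<noteq> bindigit (Suc (Suc l)) x"
  shows "x \<in> setS"
proof -
  define q where "q l = (if bindigit (Suc l) x = 1 then 2/3 else 1/3 :: real)" for l
  define e where "e l = 2 ^ l * x - of_int \<lfloor>2 ^ l * x\<rfloor> - q l" for l
  have e_Suc: "e (Suc l) = 2 * e l" if "l \<ge> M" for l
    using alt[OF that] bindigit_0_or_1[of "Suc l" x] bindigit_0_or_1[of "Suc (Suc l)" x]
    unfolding e_def q_def floor_pow2_Suc_eq by auto
  have e_shift: "e (M + k) = 2 ^ k * e M" for k
    by (induction k) (simp_all add: e_Suc)
  have e_bounded: "\<bar>e l\<bar> < 1" for l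
    unfolding e_def q_def by (auto; linarith)
  have "e M = 0"
  proof (rule ccontr)
    assume "e M \<noteq> 0"
    obtain k where "1 / \<bar>e M\<bar> < 2 ^ k"
      using real_arch_pow[of "2::real" "1 / \<bar>e M\<bar>"] by auto
    with \<open>e M \<noteq> 0\<close> have "1 < \<bar>e (M + k)\<bar>"
      by (simp add: e_shift abs_mult field_simps)
    with e_bounded show False by (meson not_less_iff_gr_or_eq order.strict_trans)
  qed
  moreover define k where "k = nat \<lfloor>2 ^ M * x\<rfloor>"
  moreover have "\<lfloor>2 ^ M * x\<rfloor> \<ge> 0" using x by simp
  ultimately have "x = real k / 2 ^ M + q M / 2 ^ M"
    unfolding e_def by (simp add: field_simps)
  then have "x = real k / 2 ^ M + 1 / (3 * 2 ^ M) \<or> x = real k / 2 ^ M + 2 / (3 * 2 ^ M)"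
    unfolding q_def by (auto split: if_splits)
  with x show ?thesis unfolding setS_def by blast
qed

lemma frequently_equal_consecutive_digits:
  assumes "x \<in> {0..1}" "x \<notin> setS"
  shows "\<exists>p\<ge>N. bindigit (Suc p) x = bindigit (Suc (Suc p)) x"
  using alternating_digits_imp_setS[OF assms(1), of N] assms(2) by blast

lemma signed_step_back:
  fixes t b\<^sub>0 b\<^sub>1 e s c :: real
  assumes t: "t > 1" and rec: "b\<^sub>1 = b\<^sub>0 / t + e"
    and e: "e = 1 \<or> e = -1" and s: "s = 1 \<or> s = -1"
    and below: "s * b\<^sub>1 \<le> -c" and c: "c \<ge> 0"
  shows "e * b\<^sub>0 \<ge> t * (c - 1) \<or> s * b\<^sub>0 \<le> -(c + 1)"
proof -
  have b\<^sub>0: "b\<^sub>0 = t * (b\<^sub>1 - e)" using rec t by (simp add: field_simps)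
  show ?thesis
  proof (cases "e = s")
    case True
    then have "s * b\<^sub>0 = t * (s * b\<^sub>1 - 1)" using b\<^sub>0 s by (auto simp: algebra_simps)
    also have "\<dots> \<le> t * (-c - 1)" using below t by simp
    also have "\<dots> \<le> -c - 1" using t c by (simp add: mult_le_cancel_right1)
    finally show ?thesis by simp
  next
    case False
    then have "e * b\<^sub>0 = - t * (s * b\<^sub>1 + 1)" using b\<^sub>0 e s by (auto simp: algebra_simps)
    also have "\<dots> \<ge> t * (c - 1)"
      using mult_left_mono[of "c - 1" "- (s * b\<^sub>1) - 1" t] below t by (simp add: algebra_simps)
    finally show ?thesis by simp
  qed
qed

context
  fixes t :: real and b \<epsilon> :: "nat \<Rightarrow> real"
  assumes t: "t > 1"
    and rec: "\<And>m. b (Suc m) = b m / t + \<epsilon> (Suc m)"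
    and \<epsilon>: "\<And>m. \<epsilon> m = 1 \<or> \<epsilon> m = -1"
begin

lemma normalized_descent:
  assumes s: "s = 1 \<or> s = -1" and A: "A > 1 + \<delta>" "\<delta> > 0"
    and small: "\<And>J. m - k < J \<Longrightarrow> J \<le> m \<Longrightarrow> \<epsilon> J * b (J - 1) \<le> \<delta> * t"
    and start: "s * b m \<le> -A" and "k \<le> m"
  shows "s * b (m - k) \<le> -A - real k"
proof -
  have "s * b (m - j) \<le> -A - real j" if "j \<le> k" for j
    using that
  proof (induction j)
    case 0
    then show ?case using start by simp
  next
    case (Suc j)
    define J where "J = m - j"
    have J: "J = Suc (m - Suc j)" "m - k < J" "J \<le> m"
      using Suc.prems \<open>k \<le> m\<close> unfolding J_def by auto
    have "s * b J \<le> -(A + real j)" using Suc unfolding J_def by simp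
    from signed_step_back[OF t rec[of "m - Suc j"] \<epsilon> s this[unfolded J(1)]]
    have "\<epsilon> J * b (J - 1) \<ge> t * (A + real j - 1) \<or> s * b (m - Suc j) \<le> -(A + real j + 1)"
      using A J(1) by simp
    moreover have "t * (A + real j - 1) > \<delta> * t" using A t by simp
    ultimately show ?case using small[OF J(2,3)] by auto
  qed
  then show ?thesis by simp
qed

lemma normalized_frequently_large:
  assumes bound: "\<And>m. \<bar>b m\<bar> < t / (t - 1)"
    and pairs: "\<And>N. \<exists>p\<ge>N. \<epsilon> p = \<epsilon> (Suc p)"
  shows "\<exists>\<delta>>0. \<forall>n. \<exists>J\<ge>n. 1 \<le> J \<and> \<epsilon> J * b (J - 1) > \<delta> * t"
proof -
  \<comment> \<open>any \<open>\<delta> > 0\<close> with \<open>t (1 - \<delta> t) > 1 + \<delta>\<close> will do\<close>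
  define \<delta> where "\<delta> = (t - 1) / (2 * (t\<^sup>2 + 1))"
  define A where "A = t * (1 - \<delta> * t)"
  define K where "K = nat \<lceil>t / (t - 1)\<rceil>"
  have \<delta>: "\<delta> > 0" using t unfolding \<delta>_def by (simp add: add_pos_nonneg)
  have "t\<^sup>2 + 1 > 0" using zero_le_power2[of t] by linarith
  then have "\<delta> * (t\<^sup>2 + 1) = (t - 1) / 2" unfolding \<delta>_def by (simp add: field_simps)
  then have A: "A > 1 + \<delta>" unfolding A_def using t by (simp add: algebra_simps power2_eq_square)
  have "\<exists>J\<ge>n. 1 \<le> J \<and> \<epsilon> J * b (J - 1) > \<delta> * t" for n
  proof (rule ccontr)
    assume none: "\<not> ?thesis"
    obtain p where p: "p \<ge> n + K + 2" "\<epsilon> p = \<epsilon> (Suc p)" using pairs by blast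
    define s where "s = \<epsilon> p"
    have s: "s = 1 \<or> s = -1" unfolding s_def using \<epsilon> by blast
    have "\<not> (Suc p \<ge> n \<and> 1 \<le> Suc p \<and> \<epsilon> (Suc p) * b (Suc p - 1) > \<delta> * t)"
      using none by blast
    then have "s * b p \<le> \<delta> * t" using p unfolding s_def by simp
    have "s * b (p - 1) = t * (s * b p - 1)"
      using rec[of "p - 1"] p(1) s t unfolding s_def by (auto simp: field_simps)
    also have "\<dots> \<le> t * (\<delta> * t - 1)" using \<open>s * b p \<le> \<delta> * t\<close> t by simp
    also have "\<dots> = -A" unfolding A_def by (simp add: algebra_simps)
    finally have start: "s * b (p - 1) \<le> -A" .
    have small: "\<epsilon> J * b (J - 1) \<le> \<delta> * t" if "p - 1 - K < J" for J
    proof -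
      have "\<not> (J \<ge> n \<and> 1 \<le> J \<and> \<epsilon> J * b (J - 1) > \<delta> * t)" using none by blast
      with that p(1) show ?thesis by auto
    qed
    have "s * b (p - 1 - K) \<le> -A - real K"
      using normalized_descent[OF s A \<delta> small start] p(1) by simp
    moreover have "real K \<ge> t / (t - 1)" unfolding K_def by linarith
    moreover have "\<bar>s * b (p - 1 - K)\<bar> < t / (t - 1)" using bound s by auto
    ultimately show False using A \<delta> by linarith
  qed
  with \<delta> show ?thesis by blast
qed

end

lemma abs_signed_geometric_sum_less:
  fixes t :: real and \<epsilon> :: "nat \<Rightarrow> real"
  assumes t: "t > 1" and \<epsilon>: "\<And>m. \<epsilon> m = 1 \<or> \<epsilon> m = -1"
  shows "\<bar>\<Sum>j=0..n. \<epsilon> j * t ^ j\<bar> < t ^ Suc n / (t - 1)"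
proof -
  have "\<bar>\<epsilon> j\<bar> = 1" for j using \<epsilon>[of j] by auto
  then have "\<bar>\<Sum>j=0..n. \<epsilon> j * t ^ j\<bar> \<le> (\<Sum>j<Suc n. t ^ j)"
    using sum_abs[of "\<lambda>j. \<epsilon> j * t ^ j" "{0..n}"] t
    by (simp add: abs_mult atLeast0AtMost lessThan_Suc_atMost)
  also have "\<dots> = (t ^ Suc n - 1) / (t - 1)" using t by (subst geometric_sum) auto
  also have "\<dots> < t ^ Suc n / (t - 1)" using t by (simp add: divide_strict_right_mono)
  finally show ?thesis .
qed

lemma signed_geometric_sum_frequently_large:
  fixes t :: real and \<epsilon> :: "nat \<Rightarrow> real"
  assumes t: "t > 1" and \<epsilon>: "\<And>m. \<epsilon> m = 1 \<or> \<epsilon> m = -1"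
    and pairs: "\<And>N. \<exists>p\<ge>N. \<epsilon> p = \<epsilon> (Suc p)"
  shows "\<exists>\<delta>>0. \<forall>n. \<exists>J\<ge>n. 1 \<le> J \<and> \<epsilon> J * (\<Sum>j=0..J-1. \<epsilon> j * t ^ j) > \<delta> * t ^ J"
proof -
  define S where "S n = (\<Sum>j=0..n. \<epsilon> j * t ^ j)" for n
  define b where "b n = S n / t ^ n" for n
  have rec: "b (Suc m) = b m / t + \<epsilon> (Suc m)" for m
    using t unfolding b_def S_def by (simp add: field_simps)
  have bound: "\<bar>b m\<bar> < t / (t - 1)" for m
    using abs_signed_geometric_sum_less[where \<epsilon> = \<epsilon> and n = m, OF t \<epsilon>] t
    unfolding b_def S_def by (simp add: field_simps abs_div)
  obtain \<delta> where \<delta>: "\<delta> > 0" and large: "\<forall>n. \<exists>J\<ge>n. 1 \<le> J \<and> \<epsilon> J * b (J - 1) > \<delta> * t"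
    using normalized_frequently_large[OF t rec \<epsilon> bound pairs] by blast
  have "\<epsilon> J * S (J - 1) > \<delta> * t ^ J" if "1 \<le> J" "\<epsilon> J * b (J - 1) > \<delta> * t" for J
  proof -
    have "\<epsilon> J * S (J - 1) = (\<epsilon> J * b (J - 1)) * t ^ (J - 1)"
      unfolding b_def using t by simp
    also have "\<dots> > (\<delta> * t) * t ^ (J - 1)" using that t by simp
    also have "(\<delta> * t) * t ^ (J - 1) = \<delta> * t ^ J"
      using \<open>1 \<le> J\<close> by (simp add: power_eq_if)
    finally show ?thesis .
  qed
  with \<delta> large show ?thesis unfolding S_def by meson
qed

lemma Cslope_eq_signed_geometric_sum:
  "Cslope \<alpha> n x = (\<Sum>j=0..n. (-1) ^ bindigit (Suc j) x * (2 powr (1 - \<alpha>)) ^ j)"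
  unfolding Cslope_def by (simp add: powr_realpow[symmetric] powr_powr mult.commute)

theorem mainTheorem3:
  fixes \<alpha> x :: real
  assumes "0 < \<alpha>" "\<alpha> < 1"
    and "x \<in> {0..1}" "\<not> dyadic x" "x \<notin> setS"
  shows "\<exists>\<delta>>0. \<forall>n::nat. \<exists>J::nat. J \<ge> n \<and> J \<ge> 1 \<and>
     1 / (2 powr (1 - \<alpha>) - 1) * 2 powr (real J * (1 - \<alpha>)) > \<bar>Cslope \<alpha> (J - 1) x\<bar> \<and>
     \<bar>Cslope \<alpha> (J - 1) x\<bar> > \<delta> * 2 powr (real J * (1 - \<alpha>)) \<and>
     ((Cslope \<alpha> (J - 1) x > 0 \<and> bindigit (J + 1) x = 0) \<or>
      (Cslope \<alpha> (J - 1) x < 0 \<and> bindigit (J + 1) x = 1))"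
proof -
  define t where "t = 2 powr (1 - \<alpha>)"
  define \<epsilon> where "\<epsilon> j = (-1::real) ^ bindigit (Suc j) x" for j
  have t: "t > 1" unfolding t_def using assms by simp
  have \<epsilon>: "\<epsilon> m = 1 \<or> \<epsilon> m = -1" for m
    using bindigit_0_or_1[of "Suc m" x] unfolding \<epsilon>_def by auto
  have pairs: "\<exists>p\<ge>N. \<epsilon> p = \<epsilon> (Suc p)" for N
    using frequently_equal_consecutive_digits[OF assms(3,5)] unfolding \<epsilon>_def by metis
  have C: "Cslope \<alpha> n x = (\<Sum>j=0..n. \<epsilon> j * t ^ j)" for n
    unfolding Cslope_eq_signed_geometric_sum t_def \<epsilon>_def ..
  have t_pow: "2 powr (real J * (1 - \<alpha>)) = t ^ J" for J
    using t unfolding t_def by (simp add: powr_realpow[symmetric] powr_powr mult.commute)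
  obtain \<delta> where \<delta>: "\<delta> > 0"
    and large: "\<forall>n. \<exists>J\<ge>n. 1 \<le> J \<and> \<epsilon> J * Cslope \<alpha> (J - 1) x > \<delta> * t ^ J"
    using signed_geometric_sum_frequently_large[OF t \<epsilon> pairs] unfolding C by blast
  have "\<exists>J. J \<ge> n \<and> J \<ge> 1 \<and>
     1 / (t - 1) * t ^ J > \<bar>Cslope \<alpha> (J - 1) x\<bar> \<and> \<bar>Cslope \<alpha> (J - 1) x\<bar> > \<delta> * t ^ J \<and>
     ((Cslope \<alpha> (J - 1) x > 0 \<and> bindigit (J + 1) x = 0) \<or>
      (Cslope \<alpha> (J - 1) x < 0 \<and> bindigit (J + 1) x = 1))" for n
  proof -
    obtain J where J: "J \<ge> n" "1 \<le> J" "\<epsilon> J * Cslope \<alpha> (J - 1) x > \<delta> * t ^ J"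
      using large by blast
    have "\<bar>Cslope \<alpha> (J - 1) x\<bar> < 1 / (t - 1) * t ^ J"
      using abs_signed_geometric_sum_less[where \<epsilon> = \<epsilon> and n = "J - 1", OF t \<epsilon>] J(2)
      unfolding C by simp
    moreover have "0 < \<delta> * t ^ J" using \<delta> t by simp
    moreover have "\<epsilon> J = 1 \<and> bindigit (J + 1) x = 0 \<or> \<epsilon> J = -1 \<and> bindigit (J + 1) x = 1"
      using bindigit_0_or_1[of "Suc J" x] unfolding \<epsilon>_def by auto
    ultimately show ?thesis using J by auto
  qed
  with \<delta> show ?thesis unfolding t_pow t_def[symmetric] by blast
qed
end
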